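(* There exists a (computable) constant $\delta_0>0$ such that for every diagonal physical $Q=\operatorname{diag}(\lambda_1,\lambda_2,\lambda_3)$ with $-\tfrac13<\lambda_1\le\lambda_2\le\lambda_3<\tfrac23$, $\lambda_1+\lambda_2+\lambda_3=0$ and $\lambda_2+\tfrac13<\delta_0$, setting $\nu_1=-(2\mu_1+\mu_2)$, $\nu_2=-(\mu_1+2\mu_2)$ and $A(\phi)=\nu_1\cos^2\phi+\nu_2\sin^2\phi$, one has $$\frac1\pi\int_0^{2\pi}\frac{\mathrm d\phi}{A(\phi)}\le\int_{\mathbb S^2}e^{-\nu_1x^2-\nu_2y^2}\,\mathrm dS\le\frac{\pi^2}{4}\int_0^{2\pi}\frac{\mathrm d\phi}{A(\phi)},$$ $$\frac4{\pi^3}\int_0^{2\pi}\frac{\cos^2\phi}{A^2(\phi)}\,\mathrm d\phi\le\int_{\mathbb S^2}x^2e^{-\nu_1x^2-\nu_2y^2}\,\mathrm dS\le\frac{\pi^4}{16}\int_0^{2\pi}\frac{\cos^2\phi}{A^2(\phi)}\,\mathrm d\phi,$$ $$\frac4{\pi^3}\int_0^{2\pi}\frac{\sin^2\phi}{A^2(\phi)}\,\mathrm d\phi\le\int_{\mathbb S^2}y^2e^{-\nu_1x^2-\nu_2y^2}\,\mathrm dS\le\frac{\pi^4}{16}\int_0^{2\pi}\frac{\sin^2\phi}{A^2(\phi)}\,\mathrm d\phi.$$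
   Context: Points of the unit sphere $\mathbb S^2$ are written $(x,y,z)$, and $\mathrm dS$ is surface measure. For a physical $Q$ (symmetric traceless with all eigenvalues in $(-\tfrac13,\tfrac23)$) the Ball–Majumdar potential is $f(Q)=\inf\int_{\mathbb S^2}\rho\ln\rho\,\mathrm dS$ over even probability densities $\rho$ with $\int(\mathbf n\otimes\mathbf n-\tfrac13I_3)\rho\,\mathrm dS=Q$. For diagonal physical $Q=\operatorname{diag}(\lambda_1,\lambda_2,\lambda_3)$ this infimum is attained by $\rho_Q(x,y,z)=\exp(\mu_1x^2+\mu_2y^2+\mu_3z^2)/Z$, $Z=\int_{\mathbb S^2}\exp(\mu_1x^2+\mu_2y^2+\mu_3z^2)\,\mathrm dS$, where the Lagrange multipliers $\mu_1,\mu_2,\mu_3\in\mathbb R$ satisfy $\mu_1+\mu_2+\mu_3=0$ and $\int x^2\rho_Q\,\mathrm dS=\lambda_1+\tfrac13$, $\int y^2\rho_Q\,\mathrm dS=\lambda_2+\tfrac13$, $\int z^2\rho_Q\,\mathrm dS=\lambda_3+\tfrac13$. *)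

theory Defs
  imports "HOL-Analysis.Analysis"
begin

text \<open>Surface integral over the unit sphere S^2 with respect to surface measure dS,
  written out in spherical coordinates
  (x,y,z) = (sin t cos p, sin t sin p, cos t), dS = sin t dt dp,
  t in [0,pi], p in [0,2 pi].\<close>
definition S2_integral :: "(real \<Rightarrow> real \<Rightarrow> real \<Rightarrow> real) \<Rightarrow> real" where
  "S2_integral f =
     integral ({0..pi} \<times> {0..2*pi})
       (\<lambda>(t, p). f (sin t * cos p) (sin t * sin p) (cos t) * sin t)"

text \<open>Ball--Majumdar Lagrange multipliers for Q = diag(l1,l2,l3): m1+m2+m3 = 0 and
  the second moments of rho_Q = exp(m1 x^2 + m2 y^2 + m3 z^2)/Z are l_i + 1/3.\<close>
definition BM_multipliers :: "real \<Rightarrow> real \<Rightarrow> real \<Rightarrow> real \<Rightarrow> real \<Rightarrow> real \<Rightarrow> bool" where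
  "BM_multipliers l1 l2 l3 m1 m2 m3 \<longleftrightarrow>
     (let Z = S2_integral (\<lambda>x y z. exp (m1 * x\<^sup>2 + m2 * y\<^sup>2 + m3 * z\<^sup>2)) in
       m1 + m2 + m3 = 0 \<and>
       S2_integral (\<lambda>x y z. x\<^sup>2 * exp (m1 * x\<^sup>2 + m2 * y\<^sup>2 + m3 * z\<^sup>2) / Z) = l1 + 1/3 \<and>
       S2_integral (\<lambda>x y z. y\<^sup>2 * exp (m1 * x\<^sup>2 + m2 * y\<^sup>2 + m3 * z\<^sup>2) / Z) = l2 + 1/3 \<and>
       S2_integral (\<lambda>x y z. z\<^sup>2 * exp (m1 * x\<^sup>2 + m2 * y\<^sup>2 + m3 * z\<^sup>2) / Z) = l3 + 1/3)"

end

theory Submission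
  imports Defs
begin

(* In spherical coordinates exp (-\<nu>1 x^2 - \<nu>2 y^2) = exp (-A(\<phi>) sin^2 \<theta>), so each of the
   three sphere integrals is an integral over \<phi> of a meridian integral
   \<integral>_0^\<pi> (sin \<theta>)^k exp (-a sin^2 \<theta>) sin \<theta> d\<theta> at a = A(\<phi>), with k = 0 or 2.
   As sin^2 \<theta> = (1 - cos \<theta>)(1 + cos \<theta>) lies between the smaller factor and 2 (1 - cos \<theta>),
   the meridian integral is squeezed between integrals of exp (-c (1 \<plusminus> cos \<theta>)), which have
   closed forms; for a \<ge> 1 these are of order 1/a resp. 1/a^2.
   With \<delta>0 = 1/5 one gets \<nu>1, \<nu>2 \<ge> 1, hence A \<ge> 1: an integration by parts on the sphere
   gives <z^2> = <x^2> + 2 \<nu>1 <x^2 z^2> for the Ball-Majumdar density, so \<nu>1 < 1 would force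
   \<lambda>3 + 1/3 \<le> 3 (\<lambda>1 + 1/3), impossible when \<lambda>1 + 1/3 \<le> \<lambda>2 + 1/3 < 1/5; likewise for \<nu>2. *)

lemma integral_of_real_derivative:
  fixes F f :: "real \<Rightarrow> real"
  assumes "a \<le> b" "\<And>x. x \<in> {a..b} \<Longrightarrow> (F has_real_derivative f x) (at x)"
  shows "integral {a..b} f = F b - F a"
proof (rule integral_unique, rule fundamental_theorem_of_calculus[OF assms(1)])
  show "(F has_vector_derivative f x) (at x within {a..b})" if "x \<in> {a..b}" for x
    using assms(2)[OF that]
    by (simp add: has_real_derivative_iff_has_vector_derivative[symmetric] has_field_derivative_at_within)
qed

lemma interval_times_interval:
  fixes a b c d :: real
  shows "{a..b} \<times> {c..d} = cbox (a, c) (b, d)"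
  by (subst cbox_Pair_eq) (simp only: cbox_interval)

lemma integral_interval_times_interval:
  fixes f :: "real \<times> real \<Rightarrow> real"
  assumes "continuous_on ({a..b} \<times> {c..d}) f"
  shows "integral ({a..b} \<times> {c..d}) f = integral {a..b} (\<lambda>x. integral {c..d} (\<lambda>y. f (x, y)))"
  using integral_prod_continuous[of a c b d f] assms by (simp add: interval_times_interval)

lemma integral_interval_times_interval_swap:
  fixes f :: "real \<times> real \<Rightarrow> real"
  assumes "continuous_on ({a..b} \<times> {c..d}) f"
  shows "integral ({a..b} \<times> {c..d}) f = integral {c..d} (\<lambda>y. integral {a..b} (\<lambda>x. f (x, y)))"
  using integral_swap_continuous[of a c b d "\<lambda>x y. f (x, y)"] assms
    integral_interval_times_interval[OF assms]
  by (simp add: interval_times_interval cbox_interval)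

lemma integral_fst_derivative_eq_0:
  fixes F f :: "real \<Rightarrow> real \<Rightarrow> real"
  assumes "a \<le> b" "continuous_on ({a..b} \<times> {c..d}) (\<lambda>(x, y). f x y)"
    and "\<And>x y. x \<in> {a..b} \<Longrightarrow> ((\<lambda>x. F x y) has_real_derivative f x y) (at x)"
    and "\<And>y. F a y = F b y"
  shows "integral ({a..b} \<times> {c..d}) (\<lambda>(x, y). f x y) = 0"
proof -
  have "integral {a..b} (\<lambda>x. f x y) = 0" for y
    using integral_of_real_derivative[of a b "\<lambda>x. F x y"] assms(1,3,4) by simp
  then show ?thesis
    using integral_interval_times_interval_swap[OF assms(2)] by simp
qed

lemma integral_snd_derivative_eq_0:
  fixes F f :: "real \<Rightarrow> real \<Rightarrow> real"
  assumes "c \<le> d" "continuous_on ({a..b} \<times> {c..d}) (\<lambda>(x, y). f x y)"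
    and "\<And>x y. y \<in> {c..d} \<Longrightarrow> ((\<lambda>y. F x y) has_real_derivative f x y) (at y)"
    and "\<And>x. F x c = F x d"
  shows "integral ({a..b} \<times> {c..d}) (\<lambda>(x, y). f x y) = 0"
proof -
  have "integral {c..d} (\<lambda>y. f x y) = 0" for x
    using integral_of_real_derivative[of c d "\<lambda>y. F x y"] assms(1,3,4) by simp
  then show ?thesis
    using integral_interval_times_interval[OF assms(2)] by simp
qed

lemma integral_mono_continuous:
  fixes f g :: "real \<Rightarrow> real"
  assumes "continuous_on {a..b} f" "continuous_on {a..b} g" "\<And>x. x \<in> {a..b} \<Longrightarrow> f x \<le> g x"
  shows "integral {a..b} f \<le> integral {a..b} g"
  using assms by (intro integral_le integrable_continuous_interval) auto

lemma continuous_on_S2_integrand: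
  fixes S :: "(real \<times> real) set"
  assumes "continuous_on UNIV (\<lambda>(x, y, z). f x y z)"
  shows "continuous_on S (\<lambda>(t, p). f (sin t * cos p) (sin t * sin p) (cos t) * sin t)"
proof -
  have "continuous_on S (\<lambda>v. (\<lambda>(x, y, z). f x y z)
      (sin (fst v) * cos (snd v), sin (fst v) * sin (snd v), cos (fst v)))"
    by (rule continuous_on_compose2[OF assms]) (auto intro!: continuous_intros)
  then show ?thesis
    by (auto simp: case_prod_unfold intro!: continuous_intros)
qed

lemma S2_integrand_integrable:
  assumes "continuous_on UNIV (\<lambda>(x, y, z). f x y z)"
  shows "(\<lambda>(t, p). f (sin t * cos p) (sin t * sin p) (cos t) * sin t) integrable_on {0..pi} \<times> {0..2*pi}"
  unfolding interval_times_interval by (rule integrable_continuous[OF continuous_on_S2_integrand[OF assms]])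

lemma S2_integral_iterated:
  assumes "continuous_on UNIV (\<lambda>(x, y, z). f x y z)"
  shows "S2_integral f =
    integral {0..2*pi} (\<lambda>p. integral {0..pi} (\<lambda>t. f (sin t * cos p) (sin t * sin p) (cos t) * sin t))"
  unfolding S2_integral_def
  by (subst integral_interval_times_interval_swap[OF continuous_on_S2_integrand[OF assms]]) simp

lemma spherical_coordinates_on_sphere:
  fixes t p :: real
  shows "(sin t * cos p)\<^sup>2 + (sin t * sin p)\<^sup>2 + (cos t)\<^sup>2 = 1"
  by (simp add: power_mult_distrib flip: distrib_left)

lemma S2_integral_cong:
  assumes "\<And>x y z. x\<^sup>2 + y\<^sup>2 + z\<^sup>2 = 1 \<Longrightarrow> f x y z = g x y z"
  shows "S2_integral f = S2_integral g"
  unfolding S2_integral_def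
  by (intro integral_cong) (auto simp: assms spherical_coordinates_on_sphere)

lemma S2_integral_cmult: "S2_integral (\<lambda>x y z. c * f x y z) = c * S2_integral f"
  unfolding S2_integral_def case_prod_unfold by (simp add: mult.assoc flip: integral_mult_right)

lemma S2_integral_diff:
  assumes "continuous_on UNIV (\<lambda>(x, y, z). f x y z)" "continuous_on UNIV (\<lambda>(x, y, z). g x y z)"
  shows "S2_integral (\<lambda>x y z. f x y z - g x y z) = S2_integral f - S2_integral g"
  unfolding S2_integral_def
  using integral_diff[OF S2_integrand_integrable[OF assms(1)] S2_integrand_integrable[OF assms(2)]]
  by (simp add: case_prod_unfold left_diff_distrib)

lemma S2_integral_mono:
  assumes "continuous_on UNIV (\<lambda>(x, y, z). f x y z)" "continuous_on UNIV (\<lambda>(x, y, z). g x y z)"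
    and "\<And>x y z. x\<^sup>2 + y\<^sup>2 + z\<^sup>2 = 1 \<Longrightarrow> f x y z \<le> g x y z"
  shows "S2_integral f \<le> S2_integral g"
proof -
  have "f (sin t * cos p) (sin t * sin p) (cos t) * sin t \<le> g (sin t * cos p) (sin t * sin p) (cos t) * sin t"
    if "t \<in> {0..pi}" for t p
  proof (rule mult_right_mono)
    show "0 \<le> sin t" using that by (auto intro: sin_ge_zero)
    show "f (sin t * cos p) (sin t * sin p) (cos t) \<le> g (sin t * cos p) (sin t * sin p) (cos t)"
      by (rule assms(3)[OF spherical_coordinates_on_sphere])
  qed
  then show ?thesis
    unfolding S2_integral_def
    by (intro integral_le S2_integrand_integrable assms(1,2)) auto
qed

lemma S2_integral_nonneg:
  assumes "continuous_on UNIV (\<lambda>(x, y, z). f x y z)"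
    and "\<And>x y z. x\<^sup>2 + y\<^sup>2 + z\<^sup>2 = 1 \<Longrightarrow> 0 \<le> f x y z"
  shows "0 \<le> S2_integral f"
  using S2_integral_mono[of "\<lambda>_ _ _. 0" f] assms by (simp add: S2_integral_def case_prod_unfold)

lemma integral_comp_one_pm_cos:
  fixes G g :: "real \<Rightarrow> real"
  assumes G: "\<And>u. (G has_real_derivative g u) (at u)"
  shows "integral {0..pi} (\<lambda>t. g (1 - cos t) * sin t) = G 2 - G 0"
    and "integral {0..pi} (\<lambda>t. g (1 + cos t) * sin t) = G 2 - G 0"
proof -
  have "((\<lambda>t. G (1 - cos t)) has_real_derivative g (1 - cos t) * sin t) (at t)" for t
    by (rule DERIV_chain'[OF _ G]) (auto intro!: derivative_eq_intros)
  then show "integral {0..pi} (\<lambda>t. g (1 - cos t) * sin t) = G 2 - G 0"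
    by (subst integral_of_real_derivative) auto
  have "((\<lambda>t. G (1 + cos t)) has_real_derivative g (1 + cos t) * - sin t) (at t)" for t
    by (rule DERIV_chain'[OF _ G]) (auto intro!: derivative_eq_intros)
  then have "((\<lambda>t. - G (1 + cos t)) has_real_derivative g (1 + cos t) * sin t) (at t)" for t
    using DERIV_minus by fastforce
  then show "integral {0..pi} (\<lambda>t. g (1 + cos t) * sin t) = G 2 - G 0"
    by (subst integral_of_real_derivative) auto
qed

lemma integral_exp_one_pm_cos:
  fixes b :: real
  assumes "0 < b"
  shows "integral {0..pi} (\<lambda>t. exp (- b * (1 - cos t)) * sin t) = (1 - exp (- 2 * b)) / b"
    and "integral {0..pi} (\<lambda>t. exp (- b * (1 + cos t)) * sin t) = (1 - exp (- 2 * b)) / b"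
proof -
  have "((\<lambda>u. - exp (- b * u) / b) has_real_derivative exp (- b * u)) (at u)" for u
    using assms by (auto intro!: derivative_eq_intros)
  from integral_comp_one_pm_cos[OF this] show
    "integral {0..pi} (\<lambda>t. exp (- b * (1 - cos t)) * sin t) = (1 - exp (- 2 * b)) / b"
    "integral {0..pi} (\<lambda>t. exp (- b * (1 + cos t)) * sin t) = (1 - exp (- 2 * b)) / b"
    by (simp_all add: diff_divide_distrib)
qed

lemma integral_sin_sq_exp_one_pm_cos:
  fixes b :: real
  assumes "0 < b"
  defines "J \<equiv> 2 / b\<^sup>2 - 2 / b ^ 3 + exp (- 2 * b) * (2 / b\<^sup>2 + 2 / b ^ 3)"
  shows "integral {0..pi} (\<lambda>t. (sin t)\<^sup>2 * exp (- b * (1 - cos t)) * sin t) = J"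
    and "integral {0..pi} (\<lambda>t. (sin t)\<^sup>2 * exp (- b * (1 + cos t)) * sin t) = J"
proof -
  define G where "G u = exp (- b * u) * (u\<^sup>2 / b + (2 / b\<^sup>2 - 2 / b) * u + 2 / b ^ 3 - 2 / b\<^sup>2)" for u
  have "(G has_real_derivative u * (2 - u) * exp (- b * u)) (at u)" for u
    unfolding G_def using assms
    by (auto intro!: derivative_eq_intros simp: field_simps power2_eq_square power3_eq_cube)
  note subst = integral_comp_one_pm_cos[OF this]
  have "G 2 - G 0 = J"
    unfolding G_def J_def using assms by (simp add: field_simps power2_eq_square power3_eq_cube)
  moreover have sin_sq: "(sin t)\<^sup>2 = (1 - cos t) * (2 - (1 - cos t))"
    "(sin t)\<^sup>2 = (1 + cos t) * (2 - (1 + cos t))" for t :: real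
    by (simp_all add: sin_squared_eq algebra_simps power2_eq_square)
  ultimately show
    "integral {0..pi} (\<lambda>t. (sin t)\<^sup>2 * exp (- b * (1 - cos t)) * sin t) = J"
    "integral {0..pi} (\<lambda>t. (sin t)\<^sup>2 * exp (- b * (1 + cos t)) * sin t) = J"
    using subst by (simp_all only: sin_sq)
qed

lemma exp_sin_sq_lower_bound:
  fixes a t :: real
  assumes "0 \<le> a"
  shows "exp (- (2 * a) * (1 - cos t)) \<le> exp (- a * (sin t)\<^sup>2)"
proof -
  have "(sin t)\<^sup>2 = (1 - cos t) * (1 + cos t)"
    by (simp add: sin_squared_eq algebra_simps power2_eq_square)
  also have "\<dots> \<le> (1 - cos t) * 2"
    by (intro mult_left_mono) auto
  finally have "a * (sin t)\<^sup>2 \<le> a * ((1 - cos t) * 2)"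
    using assms by (rule mult_left_mono)
  then show ?thesis
    by (simp add: algebra_simps)
qed

lemma exp_sin_sq_upper_bound:
  fixes a t :: real
  assumes "0 \<le> a"
  shows "exp (- a * (sin t)\<^sup>2) \<le> exp (- a * (1 - cos t)) + exp (- a * (1 + cos t))"
proof -
  have sin_sq: "(sin t)\<^sup>2 = (1 - cos t) * (1 + cos t)"
    by (simp add: sin_squared_eq algebra_simps power2_eq_square)
  consider "1 - cos t \<le> (sin t)\<^sup>2" | "1 + cos t \<le> (sin t)\<^sup>2"
  proof (cases "0 \<le> cos t")
    case True
    then have "(1 - cos t) * 1 \<le> (1 - cos t) * (1 + cos t)"
      by (intro mult_left_mono) auto
    then show ?thesis using that(1) sin_sq by simp
  next
    case False
    have "1 \<le> 1 - cos t" "0 \<le> 1 + cos t"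
      using False cos_ge_minus_one[of t] by linarith+
    then have "1 * (1 + cos t) \<le> (1 - cos t) * (1 + cos t)"
      by (rule mult_right_mono)
    then show ?thesis using that(2) sin_sq by simp
  qed
  then show ?thesis
  proof cases
    case 1
    then have "exp (- a * (sin t)\<^sup>2) \<le> exp (- a * (1 - cos t))"
      using assms by (simp add: mult_left_mono)
    then show ?thesis
      using exp_gt_zero[of "- a * (1 + cos t)"] by linarith
  next
    case 2
    then have "exp (- a * (sin t)\<^sup>2) \<le> exp (- a * (1 + cos t))"
      using assms by (simp add: mult_left_mono)
    then show ?thesis
      using exp_gt_zero[of "- a * (1 - cos t)"] by linarith
  qed
qed

definition meridian_integral :: "nat \<Rightarrow> real \<Rightarrow> real" where
  "meridian_integral k a = integral {0..pi} (\<lambda>t. (sin t) ^ k * exp (- a * (sin t)\<^sup>2) * sin t)"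

lemma continuous_on_meridian_integral: "continuous_on S (meridian_integral k)"
proof -
  have "continuous_on (S \<times> cbox 0 pi) (\<lambda>(a, t). (sin t) ^ k * exp (- a * (sin t)\<^sup>2) * sin t)"
    by (auto simp: case_prod_unfold intro!: continuous_intros)
  from integral_continuous_on_param[OF this] show ?thesis
    unfolding meridian_integral_def cbox_interval .
qed

lemma meridian_integral_envelope:
  assumes "0 \<le> a"
  shows "integral {0..pi} (\<lambda>t. (sin t) ^ k * exp (- (2 * a) * (1 - cos t)) * sin t)
      \<le> meridian_integral k a"
    and "meridian_integral k a
      \<le> integral {0..pi} (\<lambda>t. (sin t) ^ k * exp (- a * (1 - cos t)) * sin t)
       + integral {0..pi} (\<lambda>t. (sin t) ^ k * exp (- a * (1 + cos t)) * sin t)"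
proof -
  have weight: "0 \<le> (sin t) ^ k * sin t" if "t \<in> {0..pi}" for t
    using that by (intro mult_nonneg_nonneg zero_le_power sin_ge_zero) auto
  show "integral {0..pi} (\<lambda>t. (sin t) ^ k * exp (- (2 * a) * (1 - cos t)) * sin t)
      \<le> meridian_integral k a"
    unfolding meridian_integral_def
    using mult_left_mono[OF exp_sin_sq_lower_bound[OF assms] weight]
    by (intro integral_mono_continuous) (auto intro!: continuous_intros simp: ac_simps)
  have "meridian_integral k a
      \<le> integral {0..pi} (\<lambda>t. (sin t) ^ k * exp (- a * (1 - cos t)) * sin t
                             + (sin t) ^ k * exp (- a * (1 + cos t)) * sin t)"
    unfolding meridian_integral_def
    using mult_left_mono[OF exp_sin_sq_upper_bound[OF assms] weight]
    by (intro integral_mono_continuous) (auto intro!: continuous_intros simp: algebra_simps)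
  also have "\<dots> = integral {0..pi} (\<lambda>t. (sin t) ^ k * exp (- a * (1 - cos t)) * sin t)
       + integral {0..pi} (\<lambda>t. (sin t) ^ k * exp (- a * (1 + cos t)) * sin t)"
    by (intro integral_add integrable_continuous_interval continuous_intros)
  finally show "meridian_integral k a
      \<le> integral {0..pi} (\<lambda>t. (sin t) ^ k * exp (- a * (1 - cos t)) * sin t)
       + integral {0..pi} (\<lambda>t. (sin t) ^ k * exp (- a * (1 + cos t)) * sin t)" .
qed

lemma pi_power_lower_bounds: "9 \<le> pi\<^sup>2" "27 \<le> pi ^ 3" "81 \<le> pi ^ 4"
  using power_mono[of 3 pi 2] power_mono[of 3 pi 3] power_mono[of 3 pi 4] pi_gt3 by auto

lemma meridian_integral_0_bounds:
  assumes "1 \<le> a"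
  shows "1 / pi * (1 / a) \<le> meridian_integral 0 a"
    and "meridian_integral 0 a \<le> pi\<^sup>2 / 4 * (1 / a)"
proof -
  have "0 \<le> a"
    using assms by simp
  note envelope = meridian_integral_envelope[where k = 0, OF this, simplified]
  have "exp (4 * a) \<ge> 5"
    using exp_ge_add_one_self[of "4 * a"] assms by linarith
  then have "exp (- 2 * (2 * a)) \<le> 1 / 5"
    by (simp add: exp_minus field_simps)
  moreover have "2 / pi \<le> 4 / 5"
    using pi_gt3 by (simp add: field_simps)
  ultimately have "(2 / pi) / (2 * a) \<le> (1 - exp (- 2 * (2 * a))) / (2 * a)"
    using assms by (intro divide_right_mono) auto
  also have "\<dots> \<le> meridian_integral 0 a"
    using envelope(1) integral_exp_one_pm_cos(1)[of "2 * a"] assms by simp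
  finally show "1 / pi * (1 / a) \<le> meridian_integral 0 a"
    by simp
  have "meridian_integral 0 a \<le> 2 * (1 - exp (- 2 * a)) / a"
    using envelope(2) integral_exp_one_pm_cos[of a] assms by simp
  also have "\<dots> \<le> 2 / a"
    using assms by (intro divide_right_mono) auto
  also have "\<dots> \<le> (pi\<^sup>2 / 4) / a"
    using pi_power_lower_bounds(1) assms by (intro divide_right_mono) auto
  finally show "meridian_integral 0 a \<le> pi\<^sup>2 / 4 * (1 / a)"
    by simp
qed

lemma meridian_integral_2_bounds:
  assumes "1 \<le> a"
  shows "4 / pi ^ 3 * (1 / a\<^sup>2) \<le> meridian_integral 2 a"
    and "meridian_integral 2 a \<le> pi ^ 4 / 16 * (1 / a\<^sup>2)"
proof -
  have "0 \<le> a"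
    using assms by simp
  note envelope = meridian_integral_envelope[where k = 2, OF this]
  define b where "b = 2 * a"
  have "16 / pi ^ 3 \<le> 1"
    using pi_power_lower_bounds(2) by simp
  also have "1 \<le> 2 - 2 / b"
    using assms by (simp add: b_def field_simps)
  finally have "(16 / pi ^ 3) / b\<^sup>2 \<le> (2 - 2 / b) / b\<^sup>2"
    by (intro divide_right_mono) auto
  also have "\<dots> \<le> 2 / b\<^sup>2 - 2 / b ^ 3 + exp (- 2 * b) * (2 / b\<^sup>2 + 2 / b ^ 3)"
    using assms by (simp add: b_def field_simps power2_eq_square power3_eq_cube)
  also have "\<dots> \<le> meridian_integral 2 a"
    using envelope(1) integral_sin_sq_exp_one_pm_cos(1)[of b] assms by (simp add: b_def)
  finally show "4 / pi ^ 3 * (1 / a\<^sup>2) \<le> meridian_integral 2 a"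
    by (simp add: b_def power2_eq_square ac_simps)
  have "exp (2 * a) \<ge> a + 1"
    using exp_ge_add_one_self[of "2 * a"] assms by linarith
  then have "exp (- 2 * a) * (a + 1) \<le> 1"
    by (simp add: exp_minus field_simps)
  then have "exp (- 2 * a) * (a + 1) * (2 / a ^ 3) \<le> 2 / a ^ 3"
    using assms by (intro mult_left_le_one_le) auto
  then have "exp (- 2 * a) * (2 / a\<^sup>2 + 2 / a ^ 3) \<le> 2 / a ^ 3"
    using assms by (simp add: field_simps power2_eq_square power3_eq_cube)
  then have "meridian_integral 2 a \<le> 4 / a\<^sup>2"
    using envelope(2) integral_sin_sq_exp_one_pm_cos[of a] assms by simp
  also have "\<dots> \<le> (pi ^ 4 / 16) / a\<^sup>2"
    using pi_power_lower_bounds(3) assms by (intro divide_right_mono) auto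
  finally show "meridian_integral 2 a \<le> pi ^ 4 / 16 * (1 / a\<^sup>2)"
    by simp
qed

lemma continuous_on_meridian_integral_comp [continuous_intros]:
  "continuous_on S f \<Longrightarrow> continuous_on S (\<lambda>x. meridian_integral k (f x))"
  by (rule continuous_on_compose2[OF continuous_on_meridian_integral]) auto

definition azimuthal_coeff :: "real \<Rightarrow> real \<Rightarrow> real \<Rightarrow> real" where
  "azimuthal_coeff n1 n2 p = n1 * (cos p)\<^sup>2 + n2 * (sin p)\<^sup>2"

lemma continuous_on_azimuthal_coeff [continuous_intros]:
  assumes "continuous_on S f"
  shows "continuous_on S (\<lambda>x. azimuthal_coeff n1 n2 (f x))"
proof -
  have "continuous_on UNIV (azimuthal_coeff n1 n2)"
    unfolding azimuthal_coeff_def[abs_def] by (intro continuous_intros)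
  then show ?thesis
    by (rule continuous_on_compose2[OF _ assms]) auto
qed

lemma azimuthal_coeff_lower_bound:
  assumes "c \<le> n1" "c \<le> n2"
  shows "c \<le> azimuthal_coeff n1 n2 p"
proof -
  have "c * (cos p)\<^sup>2 \<le> n1 * (cos p)\<^sup>2" "c * (sin p)\<^sup>2 \<le> n2 * (sin p)\<^sup>2"
    using assms by (auto intro: mult_right_mono)
  moreover have "c * (cos p)\<^sup>2 + c * (sin p)\<^sup>2 = c"
    unfolding distrib_left[symmetric] sin_cos_squared_add2 by simp
  ultimately show ?thesis
    unfolding azimuthal_coeff_def by linarith
qed

lemma gaussian_spherical_exponent:
  "- n1 * (sin t * cos p)\<^sup>2 - n2 * (sin t * sin p)\<^sup>2 = - azimuthal_coeff n1 n2 p * (sin t)\<^sup>2"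
  unfolding azimuthal_coeff_def by (simp add: power_mult_distrib algebra_simps)

lemma S2_integral_gaussian:
  "S2_integral (\<lambda>x y z. exp (- n1 * x\<^sup>2 - n2 * y\<^sup>2))
    = integral {0..2*pi} (\<lambda>p. meridian_integral 0 (azimuthal_coeff n1 n2 p))"
proof -
  have "S2_integral (\<lambda>x y z. exp (- n1 * x\<^sup>2 - n2 * y\<^sup>2))
    = integral {0..2*pi} (\<lambda>p. integral {0..pi}
        (\<lambda>t. exp (- n1 * (sin t * cos p)\<^sup>2 - n2 * (sin t * sin p)\<^sup>2) * sin t))"
    by (rule S2_integral_iterated) (auto simp: case_prod_unfold intro!: continuous_intros)
  then show ?thesis
    unfolding gaussian_spherical_exponent meridian_integral_def by simp
qed

lemma S2_integral_gaussian_quadratic: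
  "S2_integral (\<lambda>x y z. (c1 * x\<^sup>2 + c2 * y\<^sup>2) * exp (- n1 * x\<^sup>2 - n2 * y\<^sup>2))
    = integral {0..2*pi}
        (\<lambda>p. (c1 * (cos p)\<^sup>2 + c2 * (sin p)\<^sup>2) * meridian_integral 2 (azimuthal_coeff n1 n2 p))"
proof -
  have "(c1 * (sin t * cos p)\<^sup>2 + c2 * (sin t * sin p)\<^sup>2)
          * exp (- n1 * (sin t * cos p)\<^sup>2 - n2 * (sin t * sin p)\<^sup>2) * sin t
      = (c1 * (cos p)\<^sup>2 + c2 * (sin p)\<^sup>2)
          * ((sin t)\<^sup>2 * exp (- azimuthal_coeff n1 n2 p * (sin t)\<^sup>2) * sin t)" for t p
    unfolding gaussian_spherical_exponent by (simp add: power_mult_distrib algebra_simps)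
  moreover have "S2_integral (\<lambda>x y z. (c1 * x\<^sup>2 + c2 * y\<^sup>2) * exp (- n1 * x\<^sup>2 - n2 * y\<^sup>2))
    = integral {0..2*pi} (\<lambda>p. integral {0..pi}
        (\<lambda>t. (c1 * (sin t * cos p)\<^sup>2 + c2 * (sin t * sin p)\<^sup>2)
               * exp (- n1 * (sin t * cos p)\<^sup>2 - n2 * (sin t * sin p)\<^sup>2) * sin t))"
    by (rule S2_integral_iterated) (auto simp: case_prod_unfold intro!: continuous_intros)
  ultimately show ?thesis
    by (simp only: meridian_integral_def integral_mult_right power_one_right)
qed

lemma S2_integral_gaussian_bounds:
  assumes "1 \<le> n1" "1 \<le> n2"
  shows "1 / pi * integral {0..2*pi} (\<lambda>p. 1 / azimuthal_coeff n1 n2 p)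
      \<le> S2_integral (\<lambda>x y z. exp (- n1 * x\<^sup>2 - n2 * y\<^sup>2))"
    and "S2_integral (\<lambda>x y z. exp (- n1 * x\<^sup>2 - n2 * y\<^sup>2))
      \<le> pi\<^sup>2 / 4 * integral {0..2*pi} (\<lambda>p. 1 / azimuthal_coeff n1 n2 p)"
proof -
  have A: "1 \<le> azimuthal_coeff n1 n2 p" for p
    by (rule azimuthal_coeff_lower_bound[OF assms])
  then have A_nz: "azimuthal_coeff n1 n2 p \<noteq> 0" for p
    by (metis not_one_le_zero)
  note bounds = meridian_integral_0_bounds[OF A]
  show "1 / pi * integral {0..2*pi} (\<lambda>p. 1 / azimuthal_coeff n1 n2 p)
      \<le> S2_integral (\<lambda>x y z. exp (- n1 * x\<^sup>2 - n2 * y\<^sup>2))"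
    unfolding S2_integral_gaussian integral_mult_right[symmetric]
    using bounds(1) A_nz by (intro integral_mono_continuous continuous_intros) auto
  show "S2_integral (\<lambda>x y z. exp (- n1 * x\<^sup>2 - n2 * y\<^sup>2))
      \<le> pi\<^sup>2 / 4 * integral {0..2*pi} (\<lambda>p. 1 / azimuthal_coeff n1 n2 p)"
    unfolding S2_integral_gaussian integral_mult_right[symmetric]
    using bounds(2) A_nz by (intro integral_mono_continuous continuous_intros) auto
qed

lemma S2_integral_gaussian_quadratic_bounds:
  assumes "1 \<le> n1" "1 \<le> n2" "0 \<le> c1" "0 \<le> c2"
  defines "q \<equiv> \<lambda>p. c1 * (cos p)\<^sup>2 + c2 * (sin p)\<^sup>2"
  shows "4 / pi ^ 3 * integral {0..2*pi} (\<lambda>p. q p / (azimuthal_coeff n1 n2 p)\<^sup>2)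
      \<le> S2_integral (\<lambda>x y z. (c1 * x\<^sup>2 + c2 * y\<^sup>2) * exp (- n1 * x\<^sup>2 - n2 * y\<^sup>2))"
    and "S2_integral (\<lambda>x y z. (c1 * x\<^sup>2 + c2 * y\<^sup>2) * exp (- n1 * x\<^sup>2 - n2 * y\<^sup>2))
      \<le> pi ^ 4 / 16 * integral {0..2*pi} (\<lambda>p. q p / (azimuthal_coeff n1 n2 p)\<^sup>2)"
proof -
  have A: "1 \<le> azimuthal_coeff n1 n2 p" for p
    by (rule azimuthal_coeff_lower_bound[OF assms(1,2)])
  then have A_nz: "azimuthal_coeff n1 n2 p \<noteq> 0" for p
    by (metis not_one_le_zero)
  have q_eq: "c1 * (cos p)\<^sup>2 + c2 * (sin p)\<^sup>2 = q p" for p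
    by (simp add: q_def)
  have q: "0 \<le> q p" for p
    unfolding q_def using assms(3,4) by simp
  have q_cont: "continuous_on S q" for S
    unfolding q_def by (intro continuous_intros)
  have lower: "4 / pi ^ 3 * (q p / (azimuthal_coeff n1 n2 p)\<^sup>2)
      \<le> q p * meridian_integral 2 (azimuthal_coeff n1 n2 p)" for p
    using mult_left_mono[OF meridian_integral_2_bounds(1)[OF A] q, of p p] by (simp add: mult.commute)
  have upper: "q p * meridian_integral 2 (azimuthal_coeff n1 n2 p)
      \<le> pi ^ 4 / 16 * (q p / (azimuthal_coeff n1 n2 p)\<^sup>2)" for p
    using mult_left_mono[OF meridian_integral_2_bounds(2)[OF A] q, of p p] by (simp add: mult.commute)
  show "4 / pi ^ 3 * integral {0..2*pi} (\<lambda>p. q p / (azimuthal_coeff n1 n2 p)\<^sup>2)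
      \<le> S2_integral (\<lambda>x y z. (c1 * x\<^sup>2 + c2 * y\<^sup>2) * exp (- n1 * x\<^sup>2 - n2 * y\<^sup>2))"
    unfolding S2_integral_gaussian_quadratic integral_mult_right[symmetric] q_eq
    using lower A_nz by (intro integral_mono_continuous continuous_intros q_cont) auto
  show "S2_integral (\<lambda>x y z. (c1 * x\<^sup>2 + c2 * y\<^sup>2) * exp (- n1 * x\<^sup>2 - n2 * y\<^sup>2))
      \<le> pi ^ 4 / 16 * integral {0..2*pi} (\<lambda>p. q p / (azimuthal_coeff n1 n2 p)\<^sup>2)"
    unfolding S2_integral_gaussian_quadratic integral_mult_right[symmetric] q_eq
    using upper A_nz by (intro integral_mono_continuous continuous_intros q_cont) auto
qed

(* Integration by parts on the sphere: in spherical coordinates the integrand is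
   \<partial>P/\<partial>t + \<partial>R/\<partial>p, where P vanishes at t = 0, \<pi> and R at p = 0, 2\<pi>. *)
lemma S2_integral_gaussian_moment_identity:
  "S2_integral (\<lambda>x y z. ((\<alpha> + \<beta>) * z\<^sup>2 - (\<alpha> * x\<^sup>2 + \<beta> * y\<^sup>2)
       - 2 * z\<^sup>2 * (\<alpha> * n1 * x\<^sup>2 + \<beta> * n2 * y\<^sup>2)) * exp (- n1 * x\<^sup>2 - n2 * y\<^sup>2)) = 0"
proof -
  define w where "w t p = exp (- azimuthal_coeff n1 n2 p * (sin t)\<^sup>2)" for t p
  define c where "c p = \<alpha> * (cos p)\<^sup>2 + \<beta> * (sin p)\<^sup>2" for p
  define P where "P t p = (sin t)\<^sup>2 * cos t * c p * w t p" for t p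
  define R where "R t p = (\<beta> - \<alpha>) * sin t * (cos t)\<^sup>2 * sin p * cos p * w t p" for t p
  define P' where "P' t p = c p * w t p * sin t
      * (2 * (cos t)\<^sup>2 - (sin t)\<^sup>2 - 2 * azimuthal_coeff n1 n2 p * (sin t)\<^sup>2 * (cos t)\<^sup>2)" for t p
  define R' where "R' t p = (\<beta> - \<alpha>) * sin t * (cos t)\<^sup>2 * w t p
      * ((cos p)\<^sup>2 - (sin p)\<^sup>2 - 2 * (n2 - n1) * (sin p)\<^sup>2 * (cos p)\<^sup>2 * (sin t)\<^sup>2)" for t p
  have dP: "((\<lambda>t. P t p) has_real_derivative P' t p) (at t)" for t p
    unfolding P_def P'_def w_def
    by (auto intro!: derivative_eq_intros simp: power2_eq_square algebra_simps)
  have dR: "((\<lambda>p. R t p) has_real_derivative R' t p) (at p)" for t p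
    unfolding R_def R'_def w_def azimuthal_coeff_def
    by (auto intro!: derivative_eq_intros simp: power2_eq_square algebra_simps)
  have cont: "continuous_on S (\<lambda>(t, p). P' t p)" "continuous_on S (\<lambda>(t, p). R' t p)" for S
    unfolding P'_def R'_def w_def c_def case_prod_unfold by (intro continuous_intros)+
  have "integral ({0..pi} \<times> {0..2*pi}) (\<lambda>(t, p). P' t p) = 0"
    by (rule integral_fst_derivative_eq_0[where F = P], simp_all add: dP cont) (simp add: P_def)
  moreover have "integral ({0..pi} \<times> {0..2*pi}) (\<lambda>(t, p). R' t p) = 0"
    by (rule integral_snd_derivative_eq_0[where F = R], simp_all add: dR cont) (simp add: R_def)
  moreover have "((\<alpha> + \<beta>) * (cos t)\<^sup>2 - (\<alpha> * (sin t * cos p)\<^sup>2 + \<beta> * (sin t * sin p)\<^sup>2)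
       - 2 * (cos t)\<^sup>2 * (\<alpha> * n1 * (sin t * cos p)\<^sup>2 + \<beta> * n2 * (sin t * sin p)\<^sup>2))
       * exp (- n1 * (sin t * cos p)\<^sup>2 - n2 * (sin t * sin p)\<^sup>2) * sin t
     = P' t p + R' t p" for t p
    unfolding P'_def R'_def w_def c_def gaussian_spherical_exponent
    using sin_cos_squared_add[of t] sin_cos_squared_add[of p]
    unfolding azimuthal_coeff_def by algebra
  moreover have "integral ({0..pi} \<times> {0..2*pi}) (\<lambda>(t, p). P' t p + R' t p)
      = integral ({0..pi} \<times> {0..2*pi}) (\<lambda>(t, p). P' t p) + integral ({0..pi} \<times> {0..2*pi}) (\<lambda>(t, p). R' t p)"
    unfolding interval_times_interval case_prod_unfold
    by (intro integral_add integrable_continuous cont[unfolded case_prod_unfold])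
  ultimately show ?thesis
    unfolding S2_integral_def by simp
qed

lemma S2_integral_gaussian_moment_identities:
  fixes n1 n2 :: real
  shows "S2_integral (\<lambda>x y z. z\<^sup>2 * exp (- n1 * x\<^sup>2 - n2 * y\<^sup>2))
      = S2_integral (\<lambda>x y z. x\<^sup>2 * exp (- n1 * x\<^sup>2 - n2 * y\<^sup>2))
        + 2 * n1 * S2_integral (\<lambda>x y z. x\<^sup>2 * z\<^sup>2 * exp (- n1 * x\<^sup>2 - n2 * y\<^sup>2))"
    and "S2_integral (\<lambda>x y z. z\<^sup>2 * exp (- n1 * x\<^sup>2 - n2 * y\<^sup>2))
      = S2_integral (\<lambda>x y z. y\<^sup>2 * exp (- n1 * x\<^sup>2 - n2 * y\<^sup>2))
        + 2 * n2 * S2_integral (\<lambda>x y z. y\<^sup>2 * z\<^sup>2 * exp (- n1 * x\<^sup>2 - n2 * y\<^sup>2))"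
proof -
  have split: "S2_integral (\<lambda>x y z. z\<^sup>2 * exp (- n1 * x\<^sup>2 - n2 * y\<^sup>2)
          - u x y z * exp (- n1 * x\<^sup>2 - n2 * y\<^sup>2)
          - 2 * n * (u x y z * z\<^sup>2 * exp (- n1 * x\<^sup>2 - n2 * y\<^sup>2)))
      = S2_integral (\<lambda>x y z. z\<^sup>2 * exp (- n1 * x\<^sup>2 - n2 * y\<^sup>2))
        - S2_integral (\<lambda>x y z. u x y z * exp (- n1 * x\<^sup>2 - n2 * y\<^sup>2))
        - 2 * n * S2_integral (\<lambda>x y z. u x y z * z\<^sup>2 * exp (- n1 * x\<^sup>2 - n2 * y\<^sup>2))"
    if "continuous_on UNIV (\<lambda>(x, y, z). u x y z)" for u n
  proof -
    have u: "continuous_on UNIV (\<lambda>v. u (fst v) (fst (snd v)) (snd (snd v)))"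
      using that by (simp add: case_prod_unfold)
    show ?thesis
      by (simp add: S2_integral_diff S2_integral_cmult case_prod_unfold u continuous_intros)
  qed
  have coords: "continuous_on UNIV (\<lambda>(x, y, z). x\<^sup>2 :: real)" "continuous_on UNIV (\<lambda>(x, y, z). y\<^sup>2 :: real)"
    by (auto simp: case_prod_unfold intro!: continuous_intros)
  show "S2_integral (\<lambda>x y z. z\<^sup>2 * exp (- n1 * x\<^sup>2 - n2 * y\<^sup>2))
      = S2_integral (\<lambda>x y z. x\<^sup>2 * exp (- n1 * x\<^sup>2 - n2 * y\<^sup>2))
        + 2 * n1 * S2_integral (\<lambda>x y z. x\<^sup>2 * z\<^sup>2 * exp (- n1 * x\<^sup>2 - n2 * y\<^sup>2))"
    using S2_integral_gaussian_moment_identity[of 1 0 n1 n2] split[OF coords(1), of n1]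
    by (simp add: algebra_simps)
  show "S2_integral (\<lambda>x y z. z\<^sup>2 * exp (- n1 * x\<^sup>2 - n2 * y\<^sup>2))
      = S2_integral (\<lambda>x y z. y\<^sup>2 * exp (- n1 * x\<^sup>2 - n2 * y\<^sup>2))
        + 2 * n2 * S2_integral (\<lambda>x y z. y\<^sup>2 * z\<^sup>2 * exp (- n1 * x\<^sup>2 - n2 * y\<^sup>2))"
    using S2_integral_gaussian_moment_identity[of 0 1 n1 n2] split[OF coords(2), of n2]
    by (simp add: algebra_simps)
qed

lemma S2_integral_mult_z_sq_le:
  assumes "continuous_on UNIV (\<lambda>(x, y, z). f x y z)"
    and "\<And>x y z. x\<^sup>2 + y\<^sup>2 + z\<^sup>2 = 1 \<Longrightarrow> 0 \<le> f x y z"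
  shows "0 \<le> S2_integral (\<lambda>x y z. f x y z * z\<^sup>2)"
    and "S2_integral (\<lambda>x y z. f x y z * z\<^sup>2) \<le> S2_integral f"
proof -
  have f: "continuous_on UNIV (\<lambda>v. f (fst v) (fst (snd v)) (snd (snd v)))"
    using assms(1) by (simp add: case_prod_unfold)
  have "f x y z * z\<^sup>2 \<le> f x y z * 1" if "x\<^sup>2 + y\<^sup>2 + z\<^sup>2 = 1" for x y z
  proof (rule mult_left_mono)
    have "0 \<le> x\<^sup>2" "0 \<le> y\<^sup>2"
      by simp_all
    with that show "z\<^sup>2 \<le> 1"
      by linarith
  qed (rule assms(2)[OF that])
  then show "S2_integral (\<lambda>x y z. f x y z * z\<^sup>2) \<le> S2_integral f"
    by (intro S2_integral_mono) (auto simp: case_prod_unfold f intro!: continuous_intros)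
  show "0 \<le> S2_integral (\<lambda>x y z. f x y z * z\<^sup>2)"
    using assms(2) by (intro S2_integral_nonneg) (auto simp: case_prod_unfold f intro!: continuous_intros)
qed

lemma BM_multipliers_moments:
  assumes "BM_multipliers l1 l2 l3 m1 m2 m3"
  defines "n1 \<equiv> - (2 * m1 + m2)" and "n2 \<equiv> - (m1 + 2 * m2)"
  obtains K where "0 \<le> K"
    and "l1 + 1/3 = K * S2_integral (\<lambda>x y z. x\<^sup>2 * exp (- n1 * x\<^sup>2 - n2 * y\<^sup>2))"
    and "l2 + 1/3 = K * S2_integral (\<lambda>x y z. y\<^sup>2 * exp (- n1 * x\<^sup>2 - n2 * y\<^sup>2))"
    and "l3 + 1/3 = K * S2_integral (\<lambda>x y z. z\<^sup>2 * exp (- n1 * x\<^sup>2 - n2 * y\<^sup>2))"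
proof -
  define Z where "Z = S2_integral (\<lambda>x y z. exp (m1 * x\<^sup>2 + m2 * y\<^sup>2 + m3 * z\<^sup>2))"
  define M where "M f = S2_integral (\<lambda>x y z. f x y z * exp (- n1 * x\<^sup>2 - n2 * y\<^sup>2))" for f
  have bm: "m1 + m2 + m3 = 0"
    "S2_integral (\<lambda>x y z. x\<^sup>2 * exp (m1 * x\<^sup>2 + m2 * y\<^sup>2 + m3 * z\<^sup>2) / Z) = l1 + 1/3"
    "S2_integral (\<lambda>x y z. y\<^sup>2 * exp (m1 * x\<^sup>2 + m2 * y\<^sup>2 + m3 * z\<^sup>2) / Z) = l2 + 1/3"
    "S2_integral (\<lambda>x y z. z\<^sup>2 * exp (m1 * x\<^sup>2 + m2 * y\<^sup>2 + m3 * z\<^sup>2) / Z) = l3 + 1/3"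
    using assms(1) unfolding BM_multipliers_def Let_def Z_def by auto
  have on_sphere: "exp (m1 * x\<^sup>2 + m2 * y\<^sup>2 + m3 * z\<^sup>2) = exp m3 * exp (- n1 * x\<^sup>2 - n2 * y\<^sup>2)"
    if "x\<^sup>2 + y\<^sup>2 + z\<^sup>2 = 1" for x y z :: real
  proof -
    have z: "z\<^sup>2 = 1 - x\<^sup>2 - y\<^sup>2"
      using that by linarith
    have m3: "m3 = - m1 - m2"
      using bm(1) by linarith
    have "m1 * x\<^sup>2 + m2 * y\<^sup>2 + m3 * z\<^sup>2 = m3 + (- n1 * x\<^sup>2 - n2 * y\<^sup>2)"
      unfolding z m3 n1_def n2_def by (simp add: algebra_simps)
    then show ?thesis
      by (simp add: exp_add)
  qed
  have "S2_integral (\<lambda>x y z. f x y z * exp (m1 * x\<^sup>2 + m2 * y\<^sup>2 + m3 * z\<^sup>2) / Z)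
      = exp m3 / Z * M f" for f
    unfolding M_def S2_integral_cmult[symmetric]
    by (rule S2_integral_cong) (simp add: on_sphere)
  moreover have "Z = exp m3 * M (\<lambda>_ _ _. 1)"
    unfolding Z_def M_def S2_integral_cmult[symmetric] by (rule S2_integral_cong) (simp add: on_sphere)
  moreover have "0 \<le> M (\<lambda>_ _ _. 1)"
    unfolding M_def by (intro S2_integral_nonneg) (auto simp: case_prod_unfold intro!: continuous_intros)
  ultimately show ?thesis
    using that[of "exp m3 / Z"] bm(2-4) unfolding M_def by simp
qed

lemma BM_multipliers_nu_lower_bound:
  assumes "l1 \<le> l2" "l1 + l2 + l3 = 0" "l2 + 1/3 < 1/5" "BM_multipliers l1 l2 l3 m1 m2 m3"
  shows "1 \<le> - (2 * m1 + m2)" "1 \<le> - (m1 + 2 * m2)"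
proof -
  define n1 where "n1 = - (2 * m1 + m2)"
  define n2 where "n2 = - (m1 + 2 * m2)"
  define M where "M f = S2_integral (\<lambda>x y z. f x y z * exp (- n1 * x\<^sup>2 - n2 * y\<^sup>2))" for f
  obtain K where K: "0 \<le> K" "l1 + 1/3 = K * M (\<lambda>x y z. x\<^sup>2)" "l2 + 1/3 = K * M (\<lambda>x y z. y\<^sup>2)"
    "l3 + 1/3 = K * M (\<lambda>x y z. z\<^sup>2)"
    using BM_multipliers_moments[OF assms(4)] unfolding M_def n1_def n2_def by blast
  have one_le: "1 \<le> n"
    if "M (\<lambda>x y z. z\<^sup>2) = M u + 2 * n * M (\<lambda>x y z. u x y z * z\<^sup>2)"
      and "0 \<le> M (\<lambda>x y z. u x y z * z\<^sup>2)" "M (\<lambda>x y z. u x y z * z\<^sup>2) \<le> M u"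
      and "3 * (K * M u) < K * M (\<lambda>x y z. z\<^sup>2)" for u n
  proof (rule ccontr)
    assume "\<not> 1 \<le> n"
    then have "n * M (\<lambda>x y z. u x y z * z\<^sup>2) \<le> 1 * M (\<lambda>x y z. u x y z * z\<^sup>2)"
      using that(2) by (intro mult_right_mono) auto
    then have "K * (n * M (\<lambda>x y z. u x y z * z\<^sup>2)) \<le> K * M u"
      using that(3) K(1) by (intro mult_left_mono) auto
    moreover have "K * M (\<lambda>x y z. z\<^sup>2) = K * M u + 2 * (K * (n * M (\<lambda>x y z. u x y z * z\<^sup>2)))"
      using that(1) by (simp add: algebra_simps)
    ultimately show False
      using that(4) by linarith
  qed
  have mixed_moment_bounds:
    "0 \<le> M (\<lambda>x y z. u x y z * z\<^sup>2)" "M (\<lambda>x y z. u x y z * z\<^sup>2) \<le> M u"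
    if "continuous_on UNIV (\<lambda>v. u (fst v) (fst (snd v)) (snd (snd v)))" "\<And>x y z. 0 \<le> u x y z" for u
  proof -
    have "continuous_on UNIV (\<lambda>(x, y, z). u x y z * exp (- n1 * x\<^sup>2 - n2 * y\<^sup>2))"
      unfolding case_prod_unfold by (intro continuous_intros that(1))
    note le = S2_integral_mult_z_sq_le[OF this]
    have "M (\<lambda>x y z. u x y z * z\<^sup>2)
        = S2_integral (\<lambda>x y z. u x y z * exp (- n1 * x\<^sup>2 - n2 * y\<^sup>2) * z\<^sup>2)"
      unfolding M_def by (simp add: mult_ac)
    with le that(2) show "0 \<le> M (\<lambda>x y z. u x y z * z\<^sup>2)" "M (\<lambda>x y z. u x y z * z\<^sup>2) \<le> M u"
      unfolding M_def by simp_all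
  qed
  have coords: "continuous_on UNIV (\<lambda>v. (fst v)\<^sup>2 :: real)" "continuous_on UNIV (\<lambda>v. (fst (snd v))\<^sup>2 :: real)"
    by (intro continuous_intros)+
  show "1 \<le> - (2 * m1 + m2)"
    unfolding n1_def[symmetric]
  proof (rule one_le)
    show "M (\<lambda>x y z. z\<^sup>2) = M (\<lambda>x y z. x\<^sup>2) + 2 * n1 * M (\<lambda>x y z. x\<^sup>2 * z\<^sup>2)"
      unfolding M_def by (rule S2_integral_gaussian_moment_identities(1))
    show "3 * (K * M (\<lambda>x y z. x\<^sup>2)) < K * M (\<lambda>x y z. z\<^sup>2)"
      using K assms(1-3) by linarith
  qed (use mixed_moment_bounds[OF coords(1)] in simp_all)
  show "1 \<le> - (m1 + 2 * m2)"
    unfolding n2_def[symmetric]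
  proof (rule one_le)
    show "M (\<lambda>x y z. z\<^sup>2) = M (\<lambda>x y z. y\<^sup>2) + 2 * n2 * M (\<lambda>x y z. y\<^sup>2 * z\<^sup>2)"
      unfolding M_def by (rule S2_integral_gaussian_moment_identities(2))
    show "3 * (K * M (\<lambda>x y z. y\<^sup>2)) < K * M (\<lambda>x y z. z\<^sup>2)"
      using K assms(1-3) by linarith
  qed (use mixed_moment_bounds[OF coords(2)] in simp_all)
qed

lemma S2_gaussian_integral_estimates:
  assumes "1 \<le> n1" "1 \<le> n2"
  shows "let A = (\<lambda>p. n1 * (cos p)\<^sup>2 + n2 * (sin p)\<^sup>2);
         I0 = integral {0..2*pi} (\<lambda>p. 1 / A p);
         Ix = integral {0..2*pi} (\<lambda>p. (cos p)\<^sup>2 / (A p)\<^sup>2);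
         Iy = integral {0..2*pi} (\<lambda>p. (sin p)\<^sup>2 / (A p)\<^sup>2);
         S0 = S2_integral (\<lambda>x y z. exp (- n1 * x\<^sup>2 - n2 * y\<^sup>2));
         Sx = S2_integral (\<lambda>x y z. x\<^sup>2 * exp (- n1 * x\<^sup>2 - n2 * y\<^sup>2));
         Sy = S2_integral (\<lambda>x y z. y\<^sup>2 * exp (- n1 * x\<^sup>2 - n2 * y\<^sup>2))
     in (1 / pi) * I0 \<le> S0 \<and> S0 \<le> (pi\<^sup>2 / 4) * I0 \<and>
        (4 / pi ^ 3) * Ix \<le> Sx \<and> Sx \<le> (pi ^ 4 / 16) * Ix \<and>
        (4 / pi ^ 3) * Iy \<le> Sy \<and> Sy \<le> (pi ^ 4 / 16) * Iy"
  using S2_integral_gaussian_bounds[OF assms]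
    S2_integral_gaussian_quadratic_bounds[OF assms, of 1 0]
    S2_integral_gaussian_quadratic_bounds[OF assms, of 0 1]
  by (simp add: Let_def azimuthal_coeff_def)

theorem lemma2p4:
  shows "\<exists>\<delta>0 > (0::real). \<forall>l1 l2 l3 m1 m2 m3 :: real.
    (- 1/3 < l1 \<and> l1 \<le> l2 \<and> l2 \<le> l3 \<and> l3 < 2/3 \<and> l1 + l2 + l3 = 0 \<and>
     l2 + 1/3 < \<delta>0 \<and> BM_multipliers l1 l2 l3 m1 m2 m3) \<longrightarrow>
    (let n1 = - (2 * m1 + m2); n2 = - (m1 + 2 * m2);
         A = (\<lambda>p. n1 * (cos p)\<^sup>2 + n2 * (sin p)\<^sup>2);
         I0 = integral {0..2*pi} (\<lambda>p. 1 / A p);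
         Ix = integral {0..2*pi} (\<lambda>p. (cos p)\<^sup>2 / (A p)\<^sup>2);
         Iy = integral {0..2*pi} (\<lambda>p. (sin p)\<^sup>2 / (A p)\<^sup>2);
         S0 = S2_integral (\<lambda>x y z. exp (- n1 * x\<^sup>2 - n2 * y\<^sup>2));
         Sx = S2_integral (\<lambda>x y z. x\<^sup>2 * exp (- n1 * x\<^sup>2 - n2 * y\<^sup>2));
         Sy = S2_integral (\<lambda>x y z. y\<^sup>2 * exp (- n1 * x\<^sup>2 - n2 * y\<^sup>2))
     in (1 / pi) * I0 \<le> S0 \<and> S0 \<le> (pi\<^sup>2 / 4) * I0 \<and>
        (4 / pi ^ 3) * Ix \<le> Sx \<and> Sx \<le> (pi ^ 4 / 16) * Ix \<and>
        (4 / pi ^ 3) * Iy \<le> Sy \<and> Sy \<le> (pi ^ 4 / 16) * Iy)"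
  apply (intro exI[of _ "1/5"] conjI allI impI)
   apply simp
  subgoal for l1 l2 l3 m1 m2 m3
    unfolding Let_def[of "- (2 * m1 + m2)"] Let_def[of "- (m1 + 2 * m2)"]
    by (rule S2_gaussian_integral_estimates; use BM_multipliers_nu_lower_bound[of l1 l2 l3 m1 m2 m3] in auto)
  done

end
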